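(* Consider the metric $g=2\,d\zeta\,d\bar\zeta-2\,du\,dv-2H\,du^2$ with $H=f(\zeta,u)+\overline{f(\zeta,u)}$, where $f$ is jointly smooth and holomorphic in $\zeta$, and assume $f_{,\zeta\zeta}\neq0$. Then: (a) the complex self-dual Weyl tensor $\mathbf{C}^\dagger$ is a nonzero constant multiple of $f_{,\zeta\zeta}\,(du\wedge d\zeta)\otimes(du\wedge d\zeta)$, and it is complex recurrent, $\nabla\mathbf{C}^\dagger=\mathbf{K}\otimes\mathbf{C}^\dagger$, with recurrence 1-form $$\mathbf{K}=d(\ln f_{,\zeta\zeta})=\frac{f_{,\zeta\zeta u}\,du+f_{,\zeta\zeta\zeta}\,d\zeta}{f_{,\zeta\zeta}};$$ (b) the Bel–Robinson tensor has the form $\mathbf{T}=\beta\,du\otimes du\otimes du\otimes du$ with $\beta$ a positive constant multiple of $|f_{,\zeta\zeta}|^2$; (c) $|\mathbf{K}|^2:=\overline{K}^aK_a=\left|f_{,\zeta\zeta\zeta}/f_{,\zeta\zeta}\right|^2$, and the following are equivalent: $|\mathbf{K}|^2=0$; $f_{,\zeta\zeta\zeta}=0$; $\mathbf{T}\wedge\mathbf{K}=0$.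
   Context: Here $u,v$ are real coordinates and $\zeta$ a complex coordinate; $\mathbf{C}^\dagger=\mathbf{C}-i\,{}^*\mathbf{C}$ with ${}^*C_{abcd}=\tfrac12\eta_{abef}C^{ef}{}_{cd}$, and $T_{abcd}=C_{aecf}C_b{}^e{}_d{}^f+{}^*C_{aecf}\,{}^*C_b{}^e{}_d{}^f$. For tensors $\mathbf{A}_{c_1\cdots c_k a_1\cdots a_j}$ and $\mathbf{B}_{b_1\cdots b_j}$, the operation $\wedge$ is $(\mathbf{A}\wedge\mathbf{B})_{c_1\cdots c_k a_1\cdots a_j b_1\cdots b_j}=\mathbf{A}_{c_1\cdots c_k a_1\cdots a_j}\mathbf{B}_{b_1\cdots b_j}-\mathbf{A}_{c_1\cdots c_k b_1\cdots b_j}\mathbf{B}_{a_1\cdots a_j}$ (for $\mathbf{T}\wedge\mathbf{K}$, $k=3$, $j=1$). The bar denotes complex conjugation. *)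

theory Defs
  imports "HOL-Complex_Analysis.Complex_Analysis"
begin

fun Ck_on :: "nat \<Rightarrow> ('a::real_normed_vector \<Rightarrow> 'b::real_normed_vector) \<Rightarrow> 'a set \<Rightarrow> bool" where
  "Ck_on 0 F S = continuous_on S F"
| "Ck_on (Suc k) F S = ((\<forall>x\<in>S. F differentiable (at x)) \<and>
      (\<forall>v. Ck_on k (\<lambda>x. frechet_derivative F (at x) v) S))"

definition smooth_on_set :: "('a::real_normed_vector \<Rightarrow> 'b::real_normed_vector) \<Rightarrow> 'a set \<Rightarrow> bool" where
  "smooth_on_set F S = (\<forall>k. Ck_on k F S)"

section \<open>Real coordinates (u,v,x,y), indices 0,1,2,3; zeta = x + i y\<close>

type_synonym pt = "real \<times> real \<times> real \<times> real"

definition zeta :: "pt \<Rightarrow> complex" where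
  "zeta p = (case p of (u,v,x,y) \<Rightarrow> Complex x y)"

definition shift :: "nat \<Rightarrow> real \<Rightarrow> pt \<Rightarrow> pt" where
  "shift a t p = (case p of (u,v,x,y) \<Rightarrow>
     (if a = 0 then (u+t,v,x,y) else if a = 1 then (u,v+t,x,y)
      else if a = 2 then (u,v,x+t,y) else if a = 3 then (u,v,x,y+t) else (u,v,x,y)))"

definition pd :: "nat \<Rightarrow> (pt \<Rightarrow> 'a::real_normed_vector) \<Rightarrow> pt \<Rightarrow> 'a" where
  "pd a F p = vector_derivative (\<lambda>t. F (shift a t p)) (at 0)"

definition lc :: "nat \<Rightarrow> nat \<Rightarrow> nat \<Rightarrow> nat \<Rightarrow> real" where
  "lc a b c d = (if a < 4 \<and> b < 4 \<and> c < 4 \<and> d < 4 then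
     of_int (sgn (int b - int a) * sgn (int c - int a) * sgn (int d - int a) *
             sgn (int c - int b) * sgn (int d - int b) * sgn (int d - int c)) else 0)"

definition det4 :: "(nat \<Rightarrow> nat \<Rightarrow> real) \<Rightarrow> real" where
  "det4 M = (\<Sum>a<4. \<Sum>b<4. \<Sum>c<4. \<Sum>d<4. lc a b c d * M 0 a * M 1 b * M 2 c * M 3 d)"

type_synonym metric = "nat \<Rightarrow> nat \<Rightarrow> pt \<Rightarrow> real"

definition ginv :: "metric \<Rightarrow> pt \<Rightarrow> nat \<Rightarrow> nat \<Rightarrow> real" where
  "ginv g p = (THE M. (\<forall>i j. (4 \<le> i \<or> 4 \<le> j) \<longrightarrow> M i j = 0) \<and>
       (\<forall>i<4. \<forall>k<4. (\<Sum>j<4. g i j p * M j k) = (if i = k then 1 else 0)))"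

definition Gamma :: "metric \<Rightarrow> nat \<Rightarrow> nat \<Rightarrow> nat \<Rightarrow> pt \<Rightarrow> real" where
  "Gamma g a b c p = 1/2 * (\<Sum>d<4. ginv g p a d *
      (pd b (g d c) p + pd c (g d b) p - pd d (g b c) p))"

definition RiemU :: "metric \<Rightarrow> nat \<Rightarrow> nat \<Rightarrow> nat \<Rightarrow> nat \<Rightarrow> pt \<Rightarrow> real" where
  "RiemU g a b c d p = pd c (Gamma g a d b) p - pd d (Gamma g a c b) p +
     (\<Sum>e<4. Gamma g a c e p * Gamma g e d b p - Gamma g a d e p * Gamma g e c b p)"

definition Riem :: "metric \<Rightarrow> nat \<Rightarrow> nat \<Rightarrow> nat \<Rightarrow> nat \<Rightarrow> pt \<Rightarrow> real" where
  "Riem g a b c d p = (\<Sum>e<4. g a e p * RiemU g e b c d p)"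

definition Ric :: "metric \<Rightarrow> nat \<Rightarrow> nat \<Rightarrow> pt \<Rightarrow> real" where
  "Ric g b d p = (\<Sum>a<4. RiemU g a b a d p)"

definition Scal :: "metric \<Rightarrow> pt \<Rightarrow> real" where
  "Scal g p = (\<Sum>b<4. \<Sum>d<4. ginv g p b d * Ric g b d p)"

definition Weyl :: "metric \<Rightarrow> nat \<Rightarrow> nat \<Rightarrow> nat \<Rightarrow> nat \<Rightarrow> pt \<Rightarrow> real" where
  "Weyl g a b c d p = Riem g a b c d p
     - 1/2 * (g a c p * Ric g b d p - g a d p * Ric g b c p - g b c p * Ric g a d p + g b d p * Ric g a c p)
     + Scal g p / 6 * (g a c p * g b d p - g a d p * g b c p)"

text \<open>Volume form eta, orientation: eta(d/du,d/dv,d/dx,d/dy) > 0.\<close>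
definition eta :: "metric \<Rightarrow> nat \<Rightarrow> nat \<Rightarrow> nat \<Rightarrow> nat \<Rightarrow> pt \<Rightarrow> real" where
  "eta g a b c d p = sqrt \<bar>det4 (\<lambda>i j. g i j p)\<bar> * lc a b c d"

definition raise12 :: "metric \<Rightarrow> (nat \<Rightarrow> nat \<Rightarrow> nat \<Rightarrow> nat \<Rightarrow> pt \<Rightarrow> real) \<Rightarrow> nat \<Rightarrow> nat \<Rightarrow> nat \<Rightarrow> nat \<Rightarrow> pt \<Rightarrow> real" where
  "raise12 g T e f c d p = (\<Sum>e'<4. \<Sum>f'<4. ginv g p e e' * ginv g p f f' * T e' f' c d p)"

definition raise24 :: "metric \<Rightarrow> (nat \<Rightarrow> nat \<Rightarrow> nat \<Rightarrow> nat \<Rightarrow> pt \<Rightarrow> real) \<Rightarrow> nat \<Rightarrow> nat \<Rightarrow> nat \<Rightarrow> nat \<Rightarrow> pt \<Rightarrow> real" where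
  "raise24 g T b e d f p = (\<Sum>e'<4. \<Sum>f'<4. ginv g p e e' * ginv g p f f' * T b e' d f' p)"

definition dualWeyl :: "metric \<Rightarrow> nat \<Rightarrow> nat \<Rightarrow> nat \<Rightarrow> nat \<Rightarrow> pt \<Rightarrow> real" where
  "dualWeyl g a b c d p = 1/2 * (\<Sum>e<4. \<Sum>f<4. eta g a b e f p * raise12 g (Weyl g) e f c d p)"

definition Cdag :: "metric \<Rightarrow> nat \<Rightarrow> nat \<Rightarrow> nat \<Rightarrow> nat \<Rightarrow> pt \<Rightarrow> complex" where
  "Cdag g a b c d p = complex_of_real (Weyl g a b c d p) - \<i> * complex_of_real (dualWeyl g a b c d p)"

text \<open>Covariant derivative of a complex (0,4)-tensor; derivative index first.\<close>
definition covD4 :: "metric \<Rightarrow> (nat \<Rightarrow> nat \<Rightarrow> nat \<Rightarrow> nat \<Rightarrow> pt \<Rightarrow> complex) \<Rightarrow> nat \<Rightarrow> nat \<Rightarrow> nat \<Rightarrow> nat \<Rightarrow> nat \<Rightarrow> pt \<Rightarrow> complex" where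
  "covD4 g T e a b c d p = pd e (T a b c d) p -
     (\<Sum>f<4. complex_of_real (Gamma g f e a p) * T f b c d p + complex_of_real (Gamma g f e b p) * T a f c d p
          + complex_of_real (Gamma g f e c p) * T a b f d p + complex_of_real (Gamma g f e d p) * T a b c f p)"

definition BelRobinson :: "metric \<Rightarrow> nat \<Rightarrow> nat \<Rightarrow> nat \<Rightarrow> nat \<Rightarrow> pt \<Rightarrow> real" where
  "BelRobinson g a b c d p = (\<Sum>e<4. \<Sum>f<4.
      Weyl g a e c f p * raise24 g (Weyl g) b e d f p + dualWeyl g a e c f p * raise24 g (dualWeyl g) b e d f p)"

definition wedgeTK :: "(nat \<Rightarrow> nat \<Rightarrow> nat \<Rightarrow> nat \<Rightarrow> pt \<Rightarrow> real) \<Rightarrow> (nat \<Rightarrow> pt \<Rightarrow> complex) \<Rightarrow> nat \<Rightarrow> nat \<Rightarrow> nat \<Rightarrow> nat \<Rightarrow> nat \<Rightarrow> pt \<Rightarrow> complex" where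
  "wedgeTK T K c1 c2 c3 a b p = complex_of_real (T c1 c2 c3 a p) * K b p - complex_of_real (T c1 c2 c3 b p) * K a p"

definition normK :: "metric \<Rightarrow> (nat \<Rightarrow> pt \<Rightarrow> complex) \<Rightarrow> pt \<Rightarrow> complex" where
  "normK g K p = (\<Sum>a<4. \<Sum>b<4. complex_of_real (ginv g p a b) * cnj (K a p) * K b p)"

definition du :: "nat \<Rightarrow> complex" where "du a = (if a = 0 then 1 else 0)"
definition duR :: "nat \<Rightarrow> real" where "duR a = (if a = 0 then 1 else 0)"
definition dzeta :: "nat \<Rightarrow> complex" where "dzeta a = (if a = 2 then 1 else if a = 3 then \<i> else 0)"
definition wedge1 :: "(nat \<Rightarrow> complex) \<Rightarrow> (nat \<Rightarrow> complex) \<Rightarrow> nat \<Rightarrow> nat \<Rightarrow> complex" where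
  "wedge1 A B a b = A a * B b - A b * B a"

definition Hfun :: "(complex \<Rightarrow> real \<Rightarrow> complex) \<Rightarrow> pt \<Rightarrow> real" where
  "Hfun f p = Re (f (zeta p) (fst p) + cnj (f (zeta p) (fst p)))"

definition pp_metric :: "(complex \<Rightarrow> real \<Rightarrow> complex) \<Rightarrow> metric" where
  "pp_metric f a b p = (if a = 0 \<and> b = 0 then - 2 * Hfun f p
     else if (a = 0 \<and> b = 1) \<or> (a = 1 \<and> b = 0) then -1
     else if (a = 2 \<and> b = 2) \<or> (a = 3 \<and> b = 3) then 2 else 0)"

definition fz :: "(complex \<Rightarrow> real \<Rightarrow> complex) \<Rightarrow> complex \<Rightarrow> real \<Rightarrow> complex" where
  "fz f z u = deriv (\<lambda>w. f w u) z"
definition fzz :: "(complex \<Rightarrow> real \<Rightarrow> complex) \<Rightarrow> complex \<Rightarrow> real \<Rightarrow> complex" where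
  "fzz f z u = deriv (\<lambda>w. fz f w u) z"
definition fzzz :: "(complex \<Rightarrow> real \<Rightarrow> complex) \<Rightarrow> complex \<Rightarrow> real \<Rightarrow> complex" where
  "fzzz f z u = deriv (\<lambda>w. fzz f w u) z"

definition Fzz :: "(complex \<Rightarrow> real \<Rightarrow> complex) \<Rightarrow> pt \<Rightarrow> complex" where
  "Fzz f p = fzz f (zeta p) (fst p)"
definition Fzzz :: "(complex \<Rightarrow> real \<Rightarrow> complex) \<Rightarrow> pt \<Rightarrow> complex" where
  "Fzzz f p = fzzz f (zeta p) (fst p)"

text \<open>Recurrence 1-form K = (f_{zz u} du + f_{zzz} dzeta) / f_{zz}; f_{zz u} = pd 0 (Fzz f).\<close>
definition Kform :: "(complex \<Rightarrow> real \<Rightarrow> complex) \<Rightarrow> nat \<Rightarrow> pt \<Rightarrow> complex" where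
  "Kform f e p = (pd 0 (Fzz f) p * du e + Fzzz f p * dzeta e) / Fzz f p"

end

theory Submission
  imports Defs
begin

text \<open>Since H = f + cnj f does not depend on v, the Christoffel symbols of the pp-wave are first
derivatives of H and the Riemann tensor is linear in its second derivatives. Holomorphy of f turns
the transverse Hessian of H into the real and imaginary parts of 2 f_zz, while the mixed
u-derivatives cancel by the symmetry of second derivatives. Hence R = Re (2 f_zz omega (x) omega)
for the constant 2-form omega = du /\ dzeta. As omega is null, the metric is Ricci flat and C = R;
as omega is self-dual, C-dagger = 2 f_zz omega (x) omega. Since omega is parallel,
nabla C-dagger = d f_zz (x) omega (x) omega = K (x) C-dagger, and the Bel-Robinson tensor reduces to
the contraction of omega with the conjugate of its raised form, which is - du (x) du; this gives
T = 4 |f_zz|^2 du (x) du (x) du (x) du.\<close>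

section \<open>Symmetry of second derivatives\<close>

definition dir_deriv :: "('a::real_normed_vector \<Rightarrow> 'b::real_normed_vector) \<Rightarrow> 'a \<Rightarrow> 'a \<Rightarrow> 'b" where
  "dir_deriv G v x = frechet_derivative G (at x) v"

lemma smooth_on_set_dir_deriv: "smooth_on_set F S \<Longrightarrow> smooth_on_set (dir_deriv F v) S"
  unfolding smooth_on_set_def dir_deriv_def by (metis Ck_on.simps(2))

lemma smooth_on_set_differentiable: "smooth_on_set F S \<Longrightarrow> x \<in> S \<Longrightarrow> F differentiable (at x)"
  unfolding smooth_on_set_def by (metis Ck_on.simps(2))

lemma smooth_on_set_continuous_at:
  "smooth_on_set F S \<Longrightarrow> open S \<Longrightarrow> x \<in> S \<Longrightarrow> continuous (at x) F"
  unfolding smooth_on_set_def by (metis Ck_on.simps(1) continuous_on_eq_continuous_at)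

lemma has_derivative_dir_deriv:
  "G differentiable (at x) \<Longrightarrow> (G has_derivative (\<lambda>h. dir_deriv G h x)) (at x)"
  unfolding dir_deriv_def using frechet_derivative_works by blast

lemma linear_dir_deriv: "G differentiable (at x) \<Longrightarrow> linear (\<lambda>h. dir_deriv G h x)"
  using has_derivative_dir_deriv has_derivative_linear by blast

lemma dir_deriv_zero: "G differentiable (at x) \<Longrightarrow> dir_deriv G 0 x = 0"
  using linear_dir_deriv linear_0 by blast

lemma dir_deriv_scaleR: "G differentiable (at x) \<Longrightarrow> dir_deriv G (c *\<^sub>R v) x = c *\<^sub>R dir_deriv G v x"
  using linear_dir_deriv linear_cmul by blast

lemma has_vector_derivative_along_line:
  assumes "G differentiable (at (y + t *\<^sub>R w))"
  shows "((\<lambda>t. G (y + t *\<^sub>R w)) has_vector_derivative dir_deriv G w (y + t *\<^sub>R w)) (at t)"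
proof -
  have "((\<lambda>t. y + t *\<^sub>R w) has_derivative (\<lambda>h. h *\<^sub>R w)) (at t)"
    by (auto intro!: derivative_eq_intros)
  from has_derivative_compose[OF this has_derivative_dir_deriv[OF assms]]
  show ?thesis
    unfolding has_vector_derivative_def by (simp add: o_def dir_deriv_scaleR[OF assms])
qed

lemma norm_increment_le:
  fixes h :: "real \<Rightarrow> 'b::real_normed_vector"
  assumes "0 \<le> s" "\<And>t. t \<in> {0..s} \<Longrightarrow> (h has_vector_derivative h' t) (at t)"
    and "\<And>t. t \<in> {0..s} \<Longrightarrow> norm (h' t - A) \<le> M"
  shows "norm (h s - h 0 - s *\<^sub>R A) \<le> M * s"
proof -
  have "norm ((h s - s *\<^sub>R A) - (h 0 - 0 *\<^sub>R A)) \<le> M * norm (s - 0)"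
  proof (rule differentiable_bound[of "{0..s}" _ "\<lambda>t x. x *\<^sub>R (h' t - A)"])
    fix t assume t: "t \<in> {0..s}"
    have "((\<lambda>t. t *\<^sub>R A) has_vector_derivative A) (at t)"
      using bounded_linear.has_vector_derivative[OF bounded_linear_scaleR_left has_vector_derivative_id]
      by simp
    with assms(2)[OF t] have "((\<lambda>t. h t - t *\<^sub>R A) has_vector_derivative h' t - A) (at t)"
      by (rule has_vector_derivative_diff)
    then show "((\<lambda>t. h t - t *\<^sub>R A) has_derivative (\<lambda>x. x *\<^sub>R (h' t - A))) (at t within {0..s})"
      using has_vector_derivative_def has_derivative_at_withinI by blast
    have "onorm (\<lambda>x. x *\<^sub>R (h' t - A)) = norm (h' t - A)"
      by (simp add: onorm_scaleR_left onorm_id)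
    then show "onorm (\<lambda>x. x *\<^sub>R (h' t - A)) \<le> M" using assms(3)[OF t] by simp
  qed (use assms in auto)
  then show ?thesis using assms(1) by (simp add: algebra_simps)
qed

definition second_diff :: "('a::real_normed_vector \<Rightarrow> 'b::real_normed_vector) \<Rightarrow> 'a \<Rightarrow> 'a \<Rightarrow> 'a \<Rightarrow> real \<Rightarrow> 'b" where
  "second_diff G x v w s = G (x + s *\<^sub>R v + s *\<^sub>R w) - G (x + s *\<^sub>R v) - G (x + s *\<^sub>R w) + G x"

lemma second_diff_commute: "second_diff G x v w s = second_diff G x w v s"
  unfolding second_diff_def by (simp add: algebra_simps)

text \<open>The mean value inequality along \<open>w\<close>, then along \<open>v\<close>.\<close>
lemma second_diff_estimate:
  fixes G :: "'a::real_normed_vector \<Rightarrow> 'b::real_normed_vector"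
  assumes ball: "ball x \<delta> \<subseteq> S" and s: "0 < s" "s * (norm v + norm w) < \<delta>"
    and dG: "\<forall>y\<in>S. G differentiable (at y)" and dGv: "\<forall>y\<in>S. dir_deriv G v differentiable (at y)"
    and bnd: "\<forall>y\<in>ball x \<delta>. norm (dir_deriv (dir_deriv G v) w y - A) \<le> \<epsilon>"
  shows "norm (second_diff G x v w s - (s * s) *\<^sub>R A) \<le> \<epsilon> * s * s"
proof -
  have in_ball: "x + r *\<^sub>R v + t *\<^sub>R w \<in> ball x \<delta>" if "r \<in> {0..s}" "t \<in> {0..s}" for r t
  proof -
    have "norm (r *\<^sub>R v + t *\<^sub>R w) \<le> r * norm v + t * norm w"
      using that norm_triangle_ineq[of "r *\<^sub>R v" "t *\<^sub>R w"] by simp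
    also have "\<dots> \<le> s * (norm v + norm w)"
      using that by (auto simp: distrib_left intro!: add_mono mult_right_mono)
    finally have "dist (x + r *\<^sub>R v + t *\<^sub>R w) x < \<delta>"
      using s by (simp add: dist_norm add.assoc)
    then show ?thesis by (simp add: dist_commute)
  qed
  have inner: "norm (dir_deriv G v (x + r *\<^sub>R v + s *\<^sub>R w) - dir_deriv G v (x + r *\<^sub>R v) - s *\<^sub>R A)
      \<le> \<epsilon> * s" if r: "r \<in> {0..s}" for r
  proof -
    have "norm (dir_deriv G v (x + r *\<^sub>R v + s *\<^sub>R w) - dir_deriv G v (x + r *\<^sub>R v + 0 *\<^sub>R w)
        - s *\<^sub>R A) \<le> \<epsilon> * s"
    proof (rule norm_increment_le)
      fix t assume t: "t \<in> {0..s}"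
      have "x + r *\<^sub>R v + t *\<^sub>R w \<in> S" using in_ball[OF r t] ball by blast
      then show "((\<lambda>t. dir_deriv G v (x + r *\<^sub>R v + t *\<^sub>R w)) has_vector_derivative
          dir_deriv (dir_deriv G v) w (x + r *\<^sub>R v + t *\<^sub>R w)) (at t)"
        using dGv by (intro has_vector_derivative_along_line) blast
      show "norm (dir_deriv (dir_deriv G v) w (x + r *\<^sub>R v + t *\<^sub>R w) - A) \<le> \<epsilon>"
        using bnd in_ball[OF r t] by blast
    qed (use s in simp)
    then show ?thesis by simp
  qed
  have "norm ((G (x + s *\<^sub>R w + s *\<^sub>R v) - G (x + s *\<^sub>R v)) - (G (x + s *\<^sub>R w + 0 *\<^sub>R v) - G (x + 0 *\<^sub>R v))
      - s *\<^sub>R (s *\<^sub>R A)) \<le> (\<epsilon> * s) * s"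
  proof (rule norm_increment_le)
    fix r assume r: "r \<in> {0..s}"
    have "x + r *\<^sub>R v + t *\<^sub>R w \<in> S" if "t \<in> {0..s}" for t using in_ball[OF r that] ball by blast
    from this[of s] this[of 0] have "x + s *\<^sub>R w + r *\<^sub>R v \<in> S" "x + r *\<^sub>R v \<in> S"
      using s(1) by (simp_all add: add_ac)
    then show "((\<lambda>r. G (x + s *\<^sub>R w + r *\<^sub>R v) - G (x + r *\<^sub>R v)) has_vector_derivative
        dir_deriv G v (x + s *\<^sub>R w + r *\<^sub>R v) - dir_deriv G v (x + r *\<^sub>R v)) (at r)"
      using dG by (intro has_vector_derivative_diff has_vector_derivative_along_line) auto
    show "norm (dir_deriv G v (x + s *\<^sub>R w + r *\<^sub>R v) - dir_deriv G v (x + r *\<^sub>R v) - s *\<^sub>R A) \<le> \<epsilon> * s"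
      using inner[OF r] by (simp add: add_ac)
  qed (use s in simp)
  then show ?thesis by (simp add: second_diff_def algebra_simps)
qed

lemma eventually_second_diff_approx:
  fixes G :: "'a::real_normed_vector \<Rightarrow> 'b::real_normed_vector"
  assumes S: "open S" and G: "smooth_on_set G S" and x: "x \<in> S" and \<epsilon>: "\<epsilon> > 0"
  shows "\<forall>\<^sub>F s in at_right 0.
    norm (second_diff G x v w s - (s * s) *\<^sub>R dir_deriv (dir_deriv G v) w x) \<le> \<epsilon> * s * s"
proof -
  let ?A = "dir_deriv (dir_deriv G v) w x"
  have "continuous (at x) (dir_deriv (dir_deriv G v) w)"
    using G S x by (intro smooth_on_set_continuous_at smooth_on_set_dir_deriv)
  then obtain d1 where d1: "d1 > 0" "\<forall>y. dist y x < d1 \<longrightarrow> dist (dir_deriv (dir_deriv G v) w y) ?A < \<epsilon>"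
    using \<epsilon> unfolding continuous_at_eps_delta by blast
  obtain d0 where d0: "d0 > 0" "ball x d0 \<subseteq> S" using S x openE by blast
  define \<delta> where "\<delta> = min d0 d1"
  have ball: "ball x \<delta> \<subseteq> S" using d0 by (auto simp: \<delta>_def)
  have bnd: "\<forall>y\<in>ball x \<delta>. norm (dir_deriv (dir_deriv G v) w y - ?A) \<le> \<epsilon>"
    using d1 by (auto simp: \<delta>_def dist_norm norm_minus_commute less_imp_le)
  have "\<forall>y\<in>S. G differentiable (at y)" "\<forall>y\<in>S. dir_deriv G v differentiable (at y)"
    using G by (auto intro: smooth_on_set_differentiable smooth_on_set_dir_deriv)
  note estimate = second_diff_estimate[OF ball _ _ this bnd]
  have "\<delta> / (norm v + norm w + 1) > 0" using d0 d1 by (simp add: \<delta>_def add_nonneg_pos)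
  moreover have "s * (norm v + norm w) < \<delta>" if "0 < s" "s < \<delta> / (norm v + norm w + 1)" for s
  proof -
    have "s * (norm v + norm w) \<le> s * (norm v + norm w + 1)" using that by simp
    also have "\<dots> < \<delta>" using that by (simp add: pos_less_divide_eq add_nonneg_pos)
    finally show ?thesis .
  qed
  ultimately show ?thesis
    unfolding eventually_at_right_field using estimate by blast
qed

theorem dir_deriv_commute:
  fixes G :: "'a::real_normed_vector \<Rightarrow> 'b::real_normed_vector"
  assumes "open S" "smooth_on_set G S" "x \<in> S"
  shows "dir_deriv (dir_deriv G v) w x = dir_deriv (dir_deriv G w) v x"
proof -
  define A where "A = dir_deriv (dir_deriv G v) w x"
  define B where "B = dir_deriv (dir_deriv G w) v x"
  have le: "norm (A - B) \<le> 2 * \<epsilon>" if "\<epsilon> > 0" for \<epsilon>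
  proof -
    have "\<forall>\<^sub>F s in at_right 0. 0 < s \<and>
        norm (second_diff G x v w s - (s * s) *\<^sub>R A) \<le> \<epsilon> * s * s \<and>
        norm (second_diff G x v w s - (s * s) *\<^sub>R B) \<le> \<epsilon> * s * s"
      using eventually_at_right_less[of 0] eventually_second_diff_approx[OF assms that, of v w]
        eventually_second_diff_approx[OF assms that, of w v]
      by eventually_elim (simp add: A_def B_def second_diff_commute[of G x w v])
    then obtain s where s: "0 < s" "norm (second_diff G x v w s - (s * s) *\<^sub>R A) \<le> \<epsilon> * s * s"
      "norm (second_diff G x v w s - (s * s) *\<^sub>R B) \<le> \<epsilon> * s * s"
      using eventually_happens'[OF trivial_limit_at_right_real] by blast
    have "(s * s) * norm (A - B) = norm ((second_diff G x v w s - (s * s) *\<^sub>R B)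
        - (second_diff G x v w s - (s * s) *\<^sub>R A))"
      by (simp add: algebra_simps flip: scaleR_diff_right)
    also have "\<dots> \<le> norm (second_diff G x v w s - (s * s) *\<^sub>R B)
        + norm (second_diff G x v w s - (s * s) *\<^sub>R A)"
      by (rule norm_triangle_ineq4)
    also have "\<dots> \<le> (s * s) * (2 * \<epsilon>)"
      using add_mono[OF s(3) s(2)] by (simp add: algebra_simps)
    finally show ?thesis using s(1) by simp
  qed
  have "norm (A - B) \<le> 0"
  proof (rule field_le_epsilon)
    show "norm (A - B) \<le> 0 + e" if "e > 0" for e
      using le[of "e / 2"] that by simp
  qed
  then show ?thesis by (simp add: A_def B_def)
qed

definition zeta_u :: "pt \<Rightarrow> complex \<times> real" where
  "zeta_u p = (zeta p, fst p)"

text \<open>The direction in \<open>(\<zeta>, u)\<close>-space of the \<open>a\<close>-th coordinate axis of \<open>(u, v, x, y)\<close>;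
  the \<open>v\<close>-axis is mapped to \<open>0\<close>.\<close>
definition coord_dir :: "nat \<Rightarrow> complex \<times> real" where
  "coord_dir a = (if a = 0 then (0, 1) else if a = 2 then (1, 0) else if a = 3 then (\<i>, 0) else 0)"

lemma coord_dir_simps: "coord_dir 1 = 0" "coord_dir 2 = (1, 0)" "coord_dir 3 = (\<i>, 0)"
  by (simp_all add: coord_dir_def zero_prod_def)

lemma zeta_u_shift: "zeta_u (shift a t p) = zeta_u p + t *\<^sub>R coord_dir a"
  by (cases p) (auto simp: shift_def coord_dir_def zeta_u_def zeta_def complex_eq_iff)

lemma isCont_zeta_u: "isCont zeta_u x"
  unfolding zeta_u_def zeta_def by (auto simp: Complex_eq split_def intro!: continuous_intros)

lemma pd_comp_zeta_u:
  assumes "(K has_derivative K') (at (zeta_u p))"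
  shows "pd a (\<lambda>q. K (zeta_u q)) p = K' (coord_dir a)"
proof -
  have "((\<lambda>t. zeta_u p + t *\<^sub>R coord_dir a) has_derivative (\<lambda>h. h *\<^sub>R coord_dir a)) (at 0)"
    by (auto intro!: derivative_eq_intros)
  moreover have "(K has_derivative K') (at (zeta_u p + 0 *\<^sub>R coord_dir a))"
    using assms by simp
  ultimately have "((\<lambda>t. K (zeta_u p + t *\<^sub>R coord_dir a)) has_derivative (\<lambda>h. K' (h *\<^sub>R coord_dir a))) (at 0)"
    by (rule has_derivative_compose[unfolded o_def])
  moreover have "(\<lambda>h. K' (h *\<^sub>R coord_dir a)) = (\<lambda>h. h *\<^sub>R K' (coord_dir a))"
    using linear_cmul[OF has_derivative_linear[OF assms]] by auto
  ultimately have "((\<lambda>t. K (zeta_u p + t *\<^sub>R coord_dir a)) has_vector_derivative K' (coord_dir a)) (at 0)"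
    by (simp add: has_vector_derivative_def)
  then show ?thesis unfolding pd_def zeta_u_shift by (rule vector_derivative_at)
qed

lemma pd_dir_deriv_zeta_u:
  fixes G :: "complex \<times> real \<Rightarrow> 'b::real_normed_vector"
  assumes "G differentiable (at (zeta_u p))" "bounded_linear L"
  shows "pd a (\<lambda>q. L (G (zeta_u q))) p = L (dir_deriv G (coord_dir a) (zeta_u p))"
  using pd_comp_zeta_u[of "\<lambda>x. L (G x)"] bounded_linear.has_derivative[OF assms(2)
    has_derivative_dir_deriv[OF assms(1)]] by blast

lemma bounded_linear_Re_mult: "bounded_linear (\<lambda>x. r * Re (c * x))"
  by (intro bounded_linear_const_mult bounded_linear_compose[OF bounded_linear_Re bounded_linear_mult_right])

lemma pd_if_const: "pd e (\<lambda>q. if P then A q else B q) p = (if P then pd e A p else pd e B p)"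
  by simp

lemma pd_cong:
  assumes "open U" "p \<in> U" and "\<And>q. q \<in> U \<Longrightarrow> A q = B q"
  shows "pd a A p = pd a B p"
proof -
  define T where "T = (\<lambda>t. shift a t p) -` U"
  have "(\<lambda>t. shift a t p) = (\<lambda>t. p + t *\<^sub>R shift a 1 0)"
    by (cases p) (auto simp: shift_def fun_eq_iff zero_prod_def)
  then have "open T" unfolding T_def
    by (auto intro!: continuous_open_vimage assms(1) continuous_intros)
  moreover have "0 \<in> T" using assms(2) by (cases p) (simp add: T_def shift_def)
  moreover have "\<And>t. t \<in> T \<Longrightarrow> A (shift a t p) = B (shift a t p)"
    using assms(3) by (simp add: T_def)
  ultimately have "((\<lambda>t. A (shift a t p)) has_vector_derivative d) (at 0) \<longleftrightarrow>
        ((\<lambda>t. B (shift a t p)) has_vector_derivative d) (at 0)" for d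
    by (auto elim!: has_vector_derivative_transform_within_open)
  then show ?thesis unfolding pd_def vector_derivative_def by simp
qed

lemma dir_deriv_horizontal:
  fixes G :: "complex \<times> real \<Rightarrow> complex"
  assumes "G differentiable (at (z, u))" "open T" "z \<in> T"
    and "\<And>w. w \<in> T \<Longrightarrow> G (w, u) = h w" "(h has_field_derivative d) (at z)"
  shows "dir_deriv G (c, 0) (z, u) = c * d"
proof -
  have "((\<lambda>w. (w, u)) has_derivative (\<lambda>h. (h, 0))) (at z)"
    by (auto intro!: derivative_eq_intros)
  from has_derivative_compose[OF this has_derivative_dir_deriv[OF assms(1)]]
  have "((\<lambda>w. G (w, u)) has_derivative (\<lambda>h. dir_deriv G (h, 0) (z, u))) (at z)"
    by (simp add: o_def)
  moreover have "((\<lambda>w. G (w, u)) has_derivative (*) d) (at z)"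
    using has_field_derivative_transform_within_open[OF assms(5,2,3)] assms(4)
    by (simp add: has_field_derivative_def)
  ultimately show ?thesis by (metis has_derivative_unique mult.commute)
qed

lemma sum_lessThan_4: "(\<Sum>i<4. g i) = g 0 + g 1 + g 2 + g (3::nat)"
  by (simp add: numeral_eq_Suc add_ac)

lemma less_4_cases: "(n::nat) < 4 \<Longrightarrow> n = 0 \<or> n = 1 \<or> n = 2 \<or> n = 3"
  by auto

lemma all_lessThan_4: "(\<forall>a<4. P a) \<longleftrightarrow> P 0 \<and> P 1 \<and> P 2 \<and> P (3::nat)"
  by (auto simp: numeral_eq_Suc less_Suc_eq)

definition pp_metric_inv :: "real \<Rightarrow> nat \<Rightarrow> nat \<Rightarrow> real" where
  "pp_metric_inv h i j = (if (i = 0 \<and> j = 1) \<or> (i = 1 \<and> j = 0) then -1 else if i = 1 \<and> j = 1 then 2 * h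
     else if (i = 2 \<and> j = 2) \<or> (i = 3 \<and> j = 3) then 1/2 else 0)"

lemma ginv_pp_metric: "ginv (pp_metric f) p = pp_metric_inv (Hfun f p)"
  unfolding ginv_def
proof (rule the_equality)
  fix M assume M: "(\<forall>i j. (4 \<le> i \<or> 4 \<le> j) \<longrightarrow> M i j = 0) \<and>
    (\<forall>i<4. \<forall>k<4. (\<Sum>j<4. pp_metric f i j p * M j k) = (if i = k then 1 else 0))"
  show "M = pp_metric_inv (Hfun f p)"
  proof (intro ext)
    fix i k
    show "M i k = pp_metric_inv (Hfun f p) i k"
    proof (cases "k < 4")
      case True
      then have "(\<Sum>j<4. pp_metric f i j p * M j k) = (if i = k then 1 else 0)" if "i < 4" for i
        using M that by blast
      from this[of 1] this[of 2] this[of 3] this[of 0] have "- M 0 k = (if 1 = k then 1 else 0)" "2 * M 2 k = (if 2 = k then 1 else 0)"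
        "2 * M 3 k = (if 3 = k then 1 else 0)"
        "- 2 * Hfun f p * M 0 k - M 1 k = (if 0 = k then 1 else 0)"
        by (simp_all add: sum_lessThan_4 pp_metric_def)
      then show ?thesis using M True
        by (cases "i < 4") (auto simp: pp_metric_inv_def numeral_eq_Suc less_Suc_eq)
    qed (use M in \<open>auto simp: pp_metric_inv_def\<close>)
  qed
qed (simp add: all_lessThan_4 sum_lessThan_4 pp_metric_inv_def pp_metric_def)

lemma eta_pp_metric: "eta (pp_metric f) a b c d p = 2 * lc a b c d"
  by (simp add: eta_def det4_def sum_lessThan_4 lc_def pp_metric_def)

abbreviation omega :: "nat \<Rightarrow> nat \<Rightarrow> complex" where
  "omega \<equiv> wedge1 du dzeta"

definition du_sharp :: "nat \<Rightarrow> complex" where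
  "du_sharp a = (if a = 1 then -1 else 0)"

definition dzeta_sharp :: "nat \<Rightarrow> complex" where
  "dzeta_sharp a = (if a = 2 then 1/2 else if a = 3 then \<i>/2 else 0)"

lemma raise_du: "(\<Sum>b<4. of_real (pp_metric_inv h a b) * du b) = du_sharp a"
  by (simp add: sum_lessThan_4 pp_metric_inv_def du_def du_sharp_def)

lemma raise_dzeta: "(\<Sum>b<4. of_real (pp_metric_inv h a b) * dzeta b) = dzeta_sharp a"
  by (simp add: sum_lessThan_4 pp_metric_inv_def dzeta_def dzeta_sharp_def)

text \<open>\<open>omega\<close> with its first index raised by the inverse metric.\<close>
definition omega_raised :: "nat \<Rightarrow> nat \<Rightarrow> complex" where
  "omega_raised a b = du_sharp a * dzeta b - du b * dzeta_sharp a"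

lemma sum_mult_wedge1_right:
  "(\<Sum>e\<in>E. c e * wedge1 A B a e) = A a * (\<Sum>e\<in>E. c e * B e) - (\<Sum>e\<in>E. c e * A e) * B a"
  by (simp add: wedge1_def algebra_simps sum_subtractf sum_distrib_left sum_distrib_right)

lemma raise_omega_second: "(\<Sum>e<4. of_real (pp_metric_inv h b e) * omega a e) = - omega_raised b a"
  unfolding sum_mult_wedge1_right raise_du raise_dzeta omega_raised_def by (simp add: algebra_simps)

lemma raise_omega_both:
  "a < 4 \<Longrightarrow> b < 4 \<Longrightarrow>
    (\<Sum>e<4. \<Sum>f<4. of_real (pp_metric_inv h a e * pp_metric_inv h b f) * omega e f)
    = wedge1 du_sharp dzeta_sharp a b"
  by (auto simp: sum_lessThan_4 numeral_eq_Suc less_Suc_eq pp_metric_inv_def wedge1_def du_def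
      dzeta_def du_sharp_def dzeta_sharp_def)

lemma lower_omega_raised:
  "a < 4 \<Longrightarrow> (\<Sum>e<4. of_real (pp_metric f a e p) * omega_raised e b) = omega a b"
  by (auto simp: sum_lessThan_4 numeral_eq_Suc less_Suc_eq pp_metric_def omega_raised_def
      wedge1_def du_def dzeta_def du_sharp_def dzeta_sharp_def)

lemma omega_raised_null: "(\<Sum>a<4. omega_raised a b * omega a d) = 0"
  by (simp add: sum_lessThan_4 omega_raised_def wedge1_def du_def dzeta_def du_sharp_def
      dzeta_sharp_def algebra_simps)

lemma omega_self_dual:
  "a < 4 \<Longrightarrow> b < 4 \<Longrightarrow>
    (\<Sum>e<4. \<Sum>f<4. of_real (lc a b e f) * wedge1 du_sharp dzeta_sharp e f) = \<i> * omega a b"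
  by (auto simp: sum_lessThan_4 numeral_eq_Suc less_Suc_eq lc_def wedge1_def du_def dzeta_def
      du_sharp_def dzeta_sharp_def)

lemma omega_contract_raised: "(\<Sum>e<4. omega a e * cnj (omega_raised e b)) = - du a * du b"
  by (simp add: sum_lessThan_4 omega_raised_def wedge1_def du_def dzeta_def du_sharp_def
      dzeta_sharp_def algebra_simps)

definition pp_christoffel :: "(nat \<Rightarrow> real) \<Rightarrow> nat \<Rightarrow> nat \<Rightarrow> nat \<Rightarrow> real" where
  "pp_christoffel dH a b c = (if a = 1 \<and> b = 0 then dH c else if a = 1 \<and> c = 0 then dH b
     else if (a = 2 \<or> a = 3) \<and> b = 0 \<and> c = 0 then dH a / 2 else 0)"

lemma Gamma_pp_metric:
  assumes "\<And>b c d. pd b (pp_metric f c d) p = (if c = 0 \<and> d = 0 then -2 * dH b else 0)"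
    and "dH 1 = 0" and "a < 4" "b < 4" "c < 4"
  shows "Gamma (pp_metric f) a b c p = pp_christoffel dH a b c"
  using assms(2-5) unfolding Gamma_def sum_lessThan_4 assms(1) ginv_pp_metric
  by (auto simp: numeral_eq_Suc less_Suc_eq pp_metric_inv_def pp_christoffel_def)

lemma riemann_pp_christoffel:
  fixes dH :: "nat \<Rightarrow> real" and ddH :: "nat \<Rightarrow> nat \<Rightarrow> real"
  assumes "dH 1 = 0" "\<And>i. ddH i 1 = 0" "\<And>i j. ddH i j = ddH j i"
    and "ddH 2 2 = 2 * Re F" "ddH 2 3 = - 2 * Im F" "ddH 3 3 = - 2 * Re F"
    and "a < 4" "b < 4" "c < 4" "d < 4"
  shows "pp_christoffel (\<lambda>i. ddH i c) a d b - pp_christoffel (\<lambda>i. ddH i d) a c b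
    + (\<Sum>e<4. pp_christoffel dH a c e * pp_christoffel dH e d b - pp_christoffel dH a d e * pp_christoffel dH e c b)
    = Re (2 * F * omega_raised a b * omega c d)"
proof -
  have "(\<Sum>e<4. pp_christoffel dH a c e * pp_christoffel dH e d b
      - pp_christoffel dH a d e * pp_christoffel dH e c b) = 0"
    using assms(1) by (simp add: sum_lessThan_4 pp_christoffel_def)
  moreover have "ddH (Suc 0) i = 0" "ddH i (Suc 0) = 0" "ddH 2 0 = ddH 0 2" "ddH 3 0 = ddH 0 3"
    "ddH 3 2 = - 2 * Im F" for i
    using assms(2-5) by (metis One_nat_def)+
  then have "\<forall>a<4. \<forall>b<4. \<forall>c<4. \<forall>d<4.
      pp_christoffel (\<lambda>i. ddH i c) a d b - pp_christoffel (\<lambda>i. ddH i d) a c b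
      = Re (2 * F * omega_raised a b * omega c d)"
    unfolding all_lessThan_4
    by (simp add: pp_christoffel_def omega_raised_def wedge1_def du_def dzeta_def
        du_sharp_def dzeta_sharp_def assms(4-6))
  ultimately show ?thesis using assms(7-10) by simp
qed

lemma omega_parallel:
  assumes "e < 4" "a < 4" "b < 4"
  shows "(\<Sum>k<4. of_real (pp_christoffel dH k e a) * omega k b + of_real (pp_christoffel dH k e b) * omega a k) = 0"
proof -
  have "\<forall>e<4. \<forall>a<4. \<forall>b<4. (\<Sum>k<4. of_real (pp_christoffel dH k e a) * omega k b
      + of_real (pp_christoffel dH k e b) * omega a k) = 0"
    unfolding all_lessThan_4 by (simp add: sum_lessThan_4 pp_christoffel_def wedge1_def du_def dzeta_def)
  then show ?thesis using assms by blast
qed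

lemma sum_mult_Re_product:
  "(\<Sum>e\<in>E. r e * Re (z * A e * B)) = Re (z * (\<Sum>e\<in>E. of_real (r e) * A e) * B)"
proof -
  have "(\<Sum>e\<in>E. r e * Re (z * A e * B)) = Re (\<Sum>e\<in>E. of_real (r e) * (z * A e * B))"
    by (simp add: Re_sum)
  also have "(\<Sum>e\<in>E. of_real (r e) * (z * A e * B)) = z * (\<Sum>e\<in>E. of_real (r e) * A e) * B"
    by (simp add: sum_distrib_left sum_distrib_right mult.assoc mult.left_commute)
  finally show ?thesis .
qed

lemma sum_Re_product: "(\<Sum>e\<in>E. Re (z * A e * B)) = Re (z * (\<Sum>e\<in>E. A e) * B)"
  by (simp only: Re_sum sum_distrib_left sum_distrib_right)

lemma raise12_Re_product:
  assumes "\<And>a b. a < 4 \<Longrightarrow> b < 4 \<Longrightarrow> T a b c d p = Re (z * A a b * B c d)"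
  shows "raise12 g T a b c d p
    = Re (z * (\<Sum>e<4. \<Sum>f<4. of_real (ginv g p a e * ginv g p b f) * A e f) * B c d)"
proof -
  have "raise12 g T a b c d p
      = (\<Sum>e<4. \<Sum>f<4. Re (of_real (ginv g p a e * ginv g p b f) * (z * A e f * B c d)))"
    unfolding raise12_def by (intro sum.cong refl) (simp add: assms)
  also have "\<dots> = Re (\<Sum>e<4. \<Sum>f<4. of_real (ginv g p a e * ginv g p b f) * (z * A e f * B c d))"
    by (simp only: Re_sum)
  also have "(\<Sum>e<4. \<Sum>f<4. of_real (ginv g p a e * ginv g p b f) * (z * A e f * B c d))
      = z * (\<Sum>e<4. \<Sum>f<4. of_real (ginv g p a e * ginv g p b f) * A e f) * B c d"
    by (simp add: sum_distrib_left sum_distrib_right mult.assoc mult.left_commute)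
  finally show ?thesis .
qed

lemma raise24_Re_product:
  assumes "\<And>e f. e < 4 \<Longrightarrow> f < 4 \<Longrightarrow> T b e d f p = Re (z * A b e * B d f)"
  shows "raise24 g T b e d f p
    = Re (z * ((\<Sum>e'<4. of_real (ginv g p e e') * A b e') * (\<Sum>f'<4. of_real (ginv g p f f') * B d f')))"
proof -
  have "raise24 g T b e d f p
      = (\<Sum>e'<4. \<Sum>f'<4. Re (of_real (ginv g p e e' * ginv g p f f') * (z * A b e' * B d f')))"
    unfolding raise24_def by (intro sum.cong refl) (simp add: assms)
  also have "\<dots> = Re (\<Sum>e'<4. \<Sum>f'<4. of_real (ginv g p e e' * ginv g p f f') * (z * A b e' * B d f'))"
    by (simp only: Re_sum)
  also have "(\<Sum>e'<4. \<Sum>f'<4. of_real (ginv g p e e' * ginv g p f f') * (z * A b e' * B d f'))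
      = z * ((\<Sum>e'<4. of_real (ginv g p e e') * A b e') * (\<Sum>f'<4. of_real (ginv g p f f') * B d f'))"
    unfolding sum_product by (simp add: sum_distrib_left mult.assoc mult.left_commute)
  finally show ?thesis .
qed

lemma Re_mult_Re_add_Re_mult_Re: "Re x * Re y + Re (\<i> * x) * Re (\<i> * y) = Re (x * cnj y)"
  by simp

section \<open>Curvature of the pp-wave\<close>

locale pp_wave =
  fixes f :: "complex \<Rightarrow> real \<Rightarrow> complex" and S :: "(complex \<times> real) set"
  assumes open_S: "open S"
    and smooth: "smooth_on_set (case_prod f) S"
    and holomorphic: "\<forall>u. (\<lambda>z. f z u) holomorphic_on {z. (z, u) \<in> S}"
    and fzz_nonzero: "\<forall>(z, u)\<in>S. fzz f z u \<noteq> 0"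
begin

definition Dom :: "pt set" where
  "Dom = {p. zeta_u p \<in> S}"

lemma open_Dom: "open Dom"
  using continuous_open_vimage[OF open_S isCont_zeta_u] by (simp add: Dom_def vimage_def)

lemma open_slice: "open {z. (z, u) \<in> S}"
  using continuous_open_vimage[OF open_S, of "\<lambda>z. (z, u)"] by (simp add: vimage_def continuous_intros)

lemma has_field_derivative_slice:
  "h holomorphic_on {z. (z, u) \<in> S} \<Longrightarrow> (z, u) \<in> S \<Longrightarrow> (h has_field_derivative deriv h z) (at z)"
  using holomorphic_on_imp_differentiable_at[OF _ open_slice] DERIV_deriv_iff_field_differentiable
  by blast

lemma holomorphic_fz: "(\<lambda>z. fz f z u) holomorphic_on {z. (z, u) \<in> S}"
  using holomorphic_deriv[OF holomorphic[rule_format] open_slice] by (simp add: fz_def[abs_def])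

lemma holomorphic_fzz: "(\<lambda>z. fzz f z u) holomorphic_on {z. (z, u) \<in> S}"
  using holomorphic_deriv[OF holomorphic_fz open_slice] by (simp add: fzz_def[abs_def])

lemma differentiable_iterated_dir_deriv:
  "x \<in> S \<Longrightarrow> case_prod f differentiable (at x)"
  "x \<in> S \<Longrightarrow> dir_deriv (case_prod f) v differentiable (at x)"
  "x \<in> S \<Longrightarrow> dir_deriv (dir_deriv (case_prod f) v) w differentiable (at x)"
  using smooth by (auto intro!: smooth_on_set_differentiable smooth_on_set_dir_deriv)

lemma dir_deriv_horizontal_f:
  "(z, u) \<in> S \<Longrightarrow> dir_deriv (case_prod f) (c, 0) (z, u) = c * fz f z u"
  by (rule dir_deriv_horizontal[OF differentiable_iterated_dir_deriv(1) open_slice])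
    (auto simp: fz_def intro: has_field_derivative_slice holomorphic[rule_format])

lemma dir_deriv2_horizontal_f:
  "(z, u) \<in> S \<Longrightarrow> dir_deriv (dir_deriv (case_prod f) (c, 0)) (c', 0) (z, u) = c' * (c * fzz f z u)"
  by (rule dir_deriv_horizontal[OF differentiable_iterated_dir_deriv(2) open_slice,
        where h = "\<lambda>w. c * fz f w u"])
    (auto simp: fzz_def dir_deriv_horizontal_f intro!: DERIV_cmult has_field_derivative_slice holomorphic_fz)

lemma dir_deriv3_horizontal_f:
  "(z, u) \<in> S \<Longrightarrow>
    dir_deriv (dir_deriv (dir_deriv (case_prod f) (1, 0)) (1, 0)) (c, 0) (z, u) = c * fzzz f z u"
  by (rule dir_deriv_horizontal[OF differentiable_iterated_dir_deriv(3) open_slice,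
        where h = "\<lambda>w. fzz f w u"])
    (auto simp: fzzz_def dir_deriv2_horizontal_f intro!: has_field_derivative_slice holomorphic_fzz)

lemma zeta_u_Dom: "p \<in> Dom \<Longrightarrow> zeta_u p \<in> S"
  by (simp add: Dom_def)

definition dH :: "pt \<Rightarrow> nat \<Rightarrow> real" where
  "dH p i = Re (2 * dir_deriv (case_prod f) (coord_dir i) (zeta_u p))"

definition ddH :: "pt \<Rightarrow> nat \<Rightarrow> nat \<Rightarrow> real" where
  "ddH p i j = Re (2 * dir_deriv (dir_deriv (case_prod f) (coord_dir i)) (coord_dir j) (zeta_u p))"

lemma Hfun_eq: "Hfun f = (\<lambda>q. Re (2 * case_prod f (zeta_u q)))"
  by (auto simp: fun_eq_iff Hfun_def zeta_u_def)

lemma pd_Hfun_scaled: "p \<in> Dom \<Longrightarrow> pd b (\<lambda>q. r * Hfun f q) p = r * dH p b"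
  unfolding Hfun_eq dH_def
  by (rule pd_dir_deriv_zeta_u[OF differentiable_iterated_dir_deriv(1)[OF zeta_u_Dom] bounded_linear_Re_mult])

lemma pd_dH_scaled: "p \<in> Dom \<Longrightarrow> pd e (\<lambda>q. r * dH q i) p = r * ddH p i e"
  unfolding dH_def ddH_def
  by (rule pd_dir_deriv_zeta_u[OF differentiable_iterated_dir_deriv(2)[OF zeta_u_Dom] bounded_linear_Re_mult])

lemma dH_1: "p \<in> Dom \<Longrightarrow> dH p 1 = 0"
  unfolding dH_def coord_dir_simps(1) by (simp add: dir_deriv_zero differentiable_iterated_dir_deriv zeta_u_Dom)

lemma ddH_1: "p \<in> Dom \<Longrightarrow> ddH p i 1 = 0"
  unfolding ddH_def coord_dir_simps(1) by (simp add: dir_deriv_zero differentiable_iterated_dir_deriv zeta_u_Dom)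

lemma ddH_commute: "p \<in> Dom \<Longrightarrow> ddH p i j = ddH p j i"
  unfolding ddH_def using dir_deriv_commute[OF open_S smooth] by (simp add: zeta_u_Dom)

lemma ddH_transverse:
  assumes "p \<in> Dom"
  shows "ddH p 2 2 = 2 * Re (Fzz f p)" "ddH p 2 3 = - 2 * Im (Fzz f p)" "ddH p 3 3 = - 2 * Re (Fzz f p)"
  using dir_deriv2_horizontal_f[OF zeta_u_Dom[OF assms, unfolded zeta_u_def]]
  unfolding ddH_def coord_dir_simps(2) coord_dir_simps(3) Fzz_def zeta_u_def by simp_all

lemma pd_pp_metric:
  assumes "p \<in> Dom"
  shows "pd b (pp_metric f c d) p = (if c = 0 \<and> d = 0 then -2 * dH p b else 0)"
proof (cases "c = 0 \<and> d = 0")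
  case True
  then have "pp_metric f c d = (\<lambda>q. -2 * Hfun f q)" by (auto simp: pp_metric_def)
  then show ?thesis using True pd_Hfun_scaled[OF assms, of b "-2"] by simp
next
  case False
  then have "pp_metric f c d = (\<lambda>q. if (c = 0 \<and> d = 1) \<or> (c = 1 \<and> d = 0) then -1
     else if (c = 2 \<and> d = 2) \<or> (c = 3 \<and> d = 3) then 2 else 0)"
    by (auto simp: fun_eq_iff pp_metric_def)
  with False show ?thesis by (auto simp: pd_def)
qed

lemma Gamma_pp:
  "p \<in> Dom \<Longrightarrow> a < 4 \<Longrightarrow> b < 4 \<Longrightarrow> c < 4 \<Longrightarrow>
    Gamma (pp_metric f) a b c p = pp_christoffel (dH p) a b c"
  by (rule Gamma_pp_metric[OF pd_pp_metric dH_1])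

lemma pd_Gamma:
  assumes "p \<in> Dom" "a < 4" "b < 4" "c < 4"
  shows "pd e (Gamma (pp_metric f) a b c) p = pp_christoffel (\<lambda>i. ddH p i e) a b c"
proof -
  have "pd e (Gamma (pp_metric f) a b c) p = pd e (\<lambda>q. pp_christoffel (dH q) a b c) p"
    using assms by (intro pd_cong[OF open_Dom]) (simp_all add: Gamma_pp)
  also have "\<dots> = pp_christoffel (\<lambda>i. ddH p i e) a b c"
    using pd_dH_scaled[OF assms(1), of e 1] pd_dH_scaled[OF assms(1), of e "1/2"]
    by (simp add: pp_christoffel_def pd_if_const pd_def)
  finally show ?thesis .
qed

lemma RiemU_pp:
  assumes "p \<in> Dom" "a < 4" "b < 4" "c < 4" "d < 4"
  shows "RiemU (pp_metric f) a b c d p = Re (2 * Fzz f p * omega_raised a b * omega c d)"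
proof -
  have "RiemU (pp_metric f) a b c d p = pp_christoffel (\<lambda>i. ddH p i c) a d b - pp_christoffel (\<lambda>i. ddH p i d) a c b
    + (\<Sum>e<4. pp_christoffel (dH p) a c e * pp_christoffel (dH p) e d b
      - pp_christoffel (dH p) a d e * pp_christoffel (dH p) e c b)"
    using assms by (simp add: RiemU_def pd_Gamma Gamma_pp sum_lessThan_4)
  also have "\<dots> = Re (2 * Fzz f p * omega_raised a b * omega c d)"
    using assms(1) by (intro riemann_pp_christoffel assms(2-5) dH_1 ddH_1 ddH_commute ddH_transverse)
  finally show ?thesis .
qed

lemma Riem_pp:
  assumes "p \<in> Dom" "a < 4" "b < 4" "c < 4" "d < 4"
  shows "Riem (pp_metric f) a b c d p = Re (2 * Fzz f p * omega a b * omega c d)"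
proof -
  have "Riem (pp_metric f) a b c d p
      = (\<Sum>e<4. pp_metric f a e p * Re (2 * Fzz f p * omega_raised e b * omega c d))"
    using assms by (simp add: Riem_def RiemU_pp)
  also have "\<dots> = Re (2 * Fzz f p * omega a b * omega c d)"
    by (simp only: sum_mult_Re_product lower_omega_raised[OF assms(2)])
  finally show ?thesis .
qed

lemma Ric_pp:
  assumes "p \<in> Dom" "b < 4" "d < 4"
  shows "Ric (pp_metric f) b d p = 0"
proof -
  have "Ric (pp_metric f) b d p = (\<Sum>a<4. Re (2 * Fzz f p * (omega_raised a b * omega a d)))"
    unfolding Ric_def using assms by (intro sum.cong refl) (simp add: RiemU_pp mult.assoc)
  also have "\<dots> = Re (2 * Fzz f p * (\<Sum>a<4. omega_raised a b * omega a d))"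
    by (simp only: Re_sum sum_distrib_left)
  finally show ?thesis by (simp add: omega_raised_null)
qed

lemma Weyl_pp:
  assumes "p \<in> Dom" "a < 4" "b < 4" "c < 4" "d < 4"
  shows "Weyl (pp_metric f) a b c d p = Re (2 * Fzz f p * omega a b * omega c d)"
  using assms by (simp add: Weyl_def Riem_pp Ric_pp Scal_def sum_lessThan_4)

lemma raise12_Weyl_pp:
  assumes "p \<in> Dom" "a < 4" "b < 4" "c < 4" "d < 4"
  shows "raise12 (pp_metric f) (Weyl (pp_metric f)) a b c d p
    = Re (2 * Fzz f p * wedge1 du_sharp dzeta_sharp a b * omega c d)"
proof -
  have "raise12 (pp_metric f) (Weyl (pp_metric f)) a b c d p = Re (2 * Fzz f p
      * (\<Sum>e<4. \<Sum>f'<4. of_real (ginv (pp_metric f) p a e * ginv (pp_metric f) p b f') * omega e f')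
      * omega c d)"
    by (rule raise12_Re_product) (simp add: Weyl_pp assms)
  then show ?thesis by (simp only: ginv_pp_metric raise_omega_both assms)
qed

lemma dualWeyl_pp:
  assumes "p \<in> Dom" "a < 4" "b < 4" "c < 4" "d < 4"
  shows "dualWeyl (pp_metric f) a b c d p = Re (\<i> * (2 * Fzz f p) * omega a b * omega c d)"
proof -
  let ?W = "wedge1 du_sharp dzeta_sharp"
  have "dualWeyl (pp_metric f) a b c d p
      = (\<Sum>e<4. \<Sum>f'<4. lc a b e f' * Re (2 * Fzz f p * ?W e f' * omega c d))"
    unfolding dualWeyl_def eta_pp_metric sum_distrib_left
    using assms by (intro sum.cong refl) (simp add: raise12_Weyl_pp)
  also have "\<dots> = Re (2 * Fzz f p * (\<Sum>e<4. \<Sum>f'<4. of_real (lc a b e f') * ?W e f') * omega c d)"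
    by (simp only: sum_mult_Re_product sum_Re_product)
  also have "\<dots> = Re (\<i> * (2 * Fzz f p) * omega a b * omega c d)"
    by (simp only: omega_self_dual assms) (simp only: ac_simps)
  finally show ?thesis .
qed

lemma Cdag_pp:
  assumes "p \<in> Dom" "a < 4" "b < 4" "c < 4" "d < 4"
  shows "Cdag (pp_metric f) a b c d p = 2 * Fzz f p * (omega a b * omega c d)"
  using assms by (simp add: Cdag_def Weyl_pp dualWeyl_pp complex_eq_iff algebra_simps)

lemma raise24_Weyl_pp:
  assumes "p \<in> Dom" "b < 4" "d < 4"
  shows "raise24 (pp_metric f) (Weyl (pp_metric f)) b e d e' p
      = Re (2 * Fzz f p * (omega_raised e b * omega_raised e' d))"
proof -
  have "raise24 (pp_metric f) (Weyl (pp_metric f)) b e d e' p = Re (2 * Fzz f p *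
      ((\<Sum>k<4. of_real (ginv (pp_metric f) p e k) * omega b k)
      * (\<Sum>k<4. of_real (ginv (pp_metric f) p e' k) * omega d k)))"
    by (rule raise24_Re_product) (simp add: Weyl_pp assms)
  then show ?thesis by (simp only: ginv_pp_metric raise_omega_second minus_mult_minus)
qed

lemma raise24_dualWeyl_pp:
  assumes "p \<in> Dom" "b < 4" "d < 4"
  shows "raise24 (pp_metric f) (dualWeyl (pp_metric f)) b e d e' p
      = Re (\<i> * (2 * Fzz f p) * (omega_raised e b * omega_raised e' d))"
proof -
  have "raise24 (pp_metric f) (dualWeyl (pp_metric f)) b e d e' p = Re (\<i> * (2 * Fzz f p) *
      ((\<Sum>k<4. of_real (ginv (pp_metric f) p e k) * omega b k)
      * (\<Sum>k<4. of_real (ginv (pp_metric f) p e' k) * omega d k)))"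
    by (rule raise24_Re_product) (simp add: dualWeyl_pp assms)
  then show ?thesis by (simp only: ginv_pp_metric raise_omega_second minus_mult_minus)
qed

lemma BelRobinson_pp:
  assumes "p \<in> Dom" "a < 4" "b < 4" "c < 4" "d < 4"
  shows "BelRobinson (pp_metric f) a b c d p = 4 * (cmod (Fzz f p))\<^sup>2 * (duR a * duR b * duR c * duR d)"
proof -
  let ?X = "\<lambda>e e'. 2 * Fzz f p * omega a e * omega c e'"
  let ?Y = "\<lambda>e e'. 2 * Fzz f p * (omega_raised e b * omega_raised e' d)"
  have "BelRobinson (pp_metric f) a b c d p = (\<Sum>e<4. \<Sum>e'<4.
      Re (?X e e') * Re (?Y e e') + Re (\<i> * ?X e e') * Re (\<i> * ?Y e e'))"
    unfolding BelRobinson_def using assms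
    by (intro sum.cong refl) (simp only: Weyl_pp dualWeyl_pp raise24_Weyl_pp raise24_dualWeyl_pp lessThan_iff mult.assoc)
  also have "\<dots> = (\<Sum>e<4. \<Sum>e'<4. Re (?X e e' * cnj (?Y e e')))"
    by (simp only: Re_mult_Re_add_Re_mult_Re)
  also have "\<dots> = Re (\<Sum>e<4. \<Sum>e'<4. ?X e e' * cnj (?Y e e'))"
    by (simp only: Re_sum)
  also have "(\<Sum>e<4. \<Sum>e'<4. ?X e e' * cnj (?Y e e')) = (2 * Fzz f p) * cnj (2 * Fzz f p)
      * ((\<Sum>e<4. omega a e * cnj (omega_raised e b)) * (\<Sum>e'<4. omega c e' * cnj (omega_raised e' d)))"
    by (simp only: sum_product) (simp add: sum_distrib_left ac_simps)
  also have "\<dots> = 4 * (cmod (Fzz f p))\<^sup>2 * (duR a * duR b * duR c * duR d)"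
    by (simp add: omega_contract_raised du_def duR_def norm_mult power_mult_distrib flip: complex_norm_square)
  finally show ?thesis by simp
qed

lemma Fzz_nonzero: "p \<in> Dom \<Longrightarrow> Fzz f p \<noteq> 0"
  using fzz_nonzero by (auto simp: Fzz_def Dom_def zeta_u_def)

lemma pd_Fzz_scaled:
  assumes "p \<in> Dom"
  shows "pd e (\<lambda>q. c * Fzz f q) p
    = c * dir_deriv (dir_deriv (dir_deriv (case_prod f) (1, 0)) (1, 0)) (coord_dir e) (zeta_u p)"
proof -
  have "Fzz f q = dir_deriv (dir_deriv (case_prod f) (1, 0)) (1, 0) (zeta_u q)" if "q \<in> Dom" for q
    using dir_deriv2_horizontal_f[OF zeta_u_Dom[OF that, unfolded zeta_u_def], of 1 1]
    by (simp add: Fzz_def zeta_u_def)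
  then have "pd e (\<lambda>q. c * Fzz f q) p
      = pd e (\<lambda>q. c * dir_deriv (dir_deriv (case_prod f) (1, 0)) (1, 0) (zeta_u q)) p"
    by (intro pd_cong[OF open_Dom assms]) simp
  also have "\<dots> = c * dir_deriv (dir_deriv (dir_deriv (case_prod f) (1, 0)) (1, 0)) (coord_dir e) (zeta_u p)"
    by (rule pd_dir_deriv_zeta_u[OF differentiable_iterated_dir_deriv(3)[OF zeta_u_Dom[OF assms]]
          bounded_linear_mult_right])
  finally show ?thesis .
qed

lemma pd_Fzz_transverse:
  assumes "p \<in> Dom"
  shows "pd 1 (Fzz f) p = 0" "pd 2 (Fzz f) p = Fzzz f p" "pd 3 (Fzz f) p = \<i> * Fzzz f p"
  using pd_Fzz_scaled[OF assms, of _ 1] dir_deriv3_horizontal_f[OF zeta_u_Dom[OF assms, unfolded zeta_u_def]]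
    differentiable_iterated_dir_deriv(3)[OF zeta_u_Dom[OF assms]]
  by (simp_all add: coord_dir_simps coord_dir_simps(1)[simplified] dir_deriv_zero Fzzz_def zeta_u_def)

lemma Kform_eq: "p \<in> Dom \<Longrightarrow> e < 4 \<Longrightarrow> Kform f e p = pd e (Fzz f) p / Fzz f p"
  using less_4_cases[of e] pd_Fzz_transverse[of p]
  by (auto simp: Kform_def du_def dzeta_def mult.commute)

lemma pd_Cdag_pp:
  assumes "p \<in> Dom" "a < 4" "b < 4" "c < 4" "d < 4"
  shows "pd e (Cdag (pp_metric f) a b c d) p = 2 * (omega a b * omega c d) * pd e (Fzz f) p"
proof -
  have "pd e (Cdag (pp_metric f) a b c d) p = pd e (\<lambda>q. (2 * (omega a b * omega c d)) * Fzz f q) p"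
    using assms by (intro pd_cong[OF open_Dom]) (simp_all add: Cdag_pp ac_simps)
  also have "\<dots> = 2 * (omega a b * omega c d) * pd e (Fzz f) p"
    using pd_Fzz_scaled[OF assms(1), of e] pd_Fzz_scaled[OF assms(1), of e 1] by simp
  finally show ?thesis .
qed

lemma covD4_Cdag_pp:
  assumes "p \<in> Dom" "e < 4" "a < 4" "b < 4" "c < 4" "d < 4"
  shows "covD4 (pp_metric f) (Cdag (pp_metric f)) e a b c d p = Kform f e p * Cdag (pp_metric f) a b c d p"
proof -
  let ?G = "\<lambda>k i j. complex_of_real (pp_christoffel (dH p) k i j)"
  let ?F = "Fzz f p"
  have "(\<Sum>k<4. complex_of_real (Gamma (pp_metric f) k e a p) * Cdag (pp_metric f) k b c d p
      + complex_of_real (Gamma (pp_metric f) k e b p) * Cdag (pp_metric f) a k c d p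
      + complex_of_real (Gamma (pp_metric f) k e c p) * Cdag (pp_metric f) a b k d p
      + complex_of_real (Gamma (pp_metric f) k e d p) * Cdag (pp_metric f) a b c k p)
    = 2 * ?F * omega c d * (\<Sum>k<4. ?G k e a * omega k b + ?G k e b * omega a k)
      + 2 * ?F * omega a b * (\<Sum>k<4. ?G k e c * omega k d + ?G k e d * omega c k)"
    using assms by (simp add: sum_lessThan_4 Gamma_pp Cdag_pp algebra_simps)
  also have "\<dots> = 0"
    using assms by (simp add: omega_parallel)
  finally show ?thesis
    using assms Fzz_nonzero[OF assms(1)] by (simp add: covD4_def pd_Cdag_pp Kform_eq Cdag_pp field_simps)
qed

lemma normK_pp:
  assumes "p \<in> Dom"
  shows "normK (pp_metric f) (Kform f) p = complex_of_real ((cmod (Fzzz f p / Fzz f p))\<^sup>2)"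
proof -
  have "normK (pp_metric f) (Kform f) p = Fzzz f p / Fzz f p * cnj (Fzzz f p / Fzz f p)"
    using Fzz_nonzero[OF assms]
    by (simp add: normK_def sum_lessThan_4 ginv_pp_metric pp_metric_inv_def Kform_def du_def dzeta_def
        field_simps)
  then show ?thesis by (simp only: complex_norm_square)
qed

lemma wedgeTK_eq_0_iff:
  assumes "p \<in> Dom"
  shows "(\<forall>c1<4. \<forall>c2<4. \<forall>c3<4. \<forall>a<4. \<forall>b<4.
      wedgeTK (BelRobinson (pp_metric f)) (Kform f) c1 c2 c3 a b p = 0) \<longleftrightarrow> Fzzz f p = 0"
proof
  assume "\<forall>c1<4. \<forall>c2<4. \<forall>c3<4. \<forall>a<4. \<forall>b<4.
      wedgeTK (BelRobinson (pp_metric f)) (Kform f) c1 c2 c3 a b p = 0"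
  then have "wedgeTK (BelRobinson (pp_metric f)) (Kform f) 0 0 0 0 2 p = 0" by simp
  then show "Fzzz f p = 0"
    using Fzz_nonzero[OF assms]
    by (simp add: wedgeTK_def BelRobinson_pp[OF assms] Kform_def duR_def du_def dzeta_def)
qed (simp add: wedgeTK_def BelRobinson_pp[OF assms] Kform_def duR_def du_def)

end

theorem mainTheorem3:
  fixes f :: "complex \<Rightarrow> real \<Rightarrow> complex" and S :: "(complex \<times> real) set"
  assumes "open S"
    and "smooth_on_set (\<lambda>(z, u). f z u) S"
    and "\<forall>u. (\<lambda>z. f z u) holomorphic_on {z. (z, u) \<in> S}"
    and "\<forall>(z, u)\<in>S. fzz f z u \<noteq> 0"
  defines "D \<equiv> {p. (zeta p, fst p) \<in> S}"
  shows
    "(\<exists>k::complex. k \<noteq> 0 \<and> (\<forall>p\<in>D. \<forall>a<4. \<forall>b<4. \<forall>c<4. \<forall>d<4.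
        Cdag (pp_metric f) a b c d p = k * Fzz f p * (wedge1 du dzeta a b * wedge1 du dzeta c d)))
   \<and> (\<forall>p\<in>D. \<forall>e<4. \<forall>a<4. \<forall>b<4. \<forall>c<4. \<forall>d<4.
        covD4 (pp_metric f) (Cdag (pp_metric f)) e a b c d p = Kform f e p * Cdag (pp_metric f) a b c d p)
   \<and> (\<forall>p\<in>D. \<forall>e<4. Kform f e p = pd e (Fzz f) p / Fzz f p)
   \<and> (\<exists>\<kappa>::real. \<kappa> > 0 \<and> (\<forall>p\<in>D. \<forall>a<4. \<forall>b<4. \<forall>c<4. \<forall>d<4.
        BelRobinson (pp_metric f) a b c d p = \<kappa> * (cmod (Fzz f p))\<^sup>2 * (duR a * duR b * duR c * duR d)))
   \<and> (\<forall>p\<in>D. normK (pp_metric f) (Kform f) p = complex_of_real ((cmod (Fzzz f p / Fzz f p))\<^sup>2))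
   \<and> (\<forall>p\<in>D. (normK (pp_metric f) (Kform f) p = 0 \<longleftrightarrow> Fzzz f p = 0)
        \<and> (Fzzz f p = 0 \<longleftrightarrow> (\<forall>c1<4. \<forall>c2<4. \<forall>c3<4. \<forall>a<4. \<forall>b<4.
              wedgeTK (BelRobinson (pp_metric f)) (Kform f) c1 c2 c3 a b p = 0)))"
proof -
  interpret pp_wave f S
    using assms(1-4) by unfold_locales
  have D: "D = Dom"
    by (simp add: assms(5) Dom_def zeta_u_def)
  show ?thesis unfolding D
  proof (intro conjI)
    show "\<exists>k::complex. k \<noteq> 0 \<and> (\<forall>p\<in>Dom. \<forall>a<4. \<forall>b<4. \<forall>c<4. \<forall>d<4.
        Cdag (pp_metric f) a b c d p = k * Fzz f p * (wedge1 du dzeta a b * wedge1 du dzeta c d))"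
      by (intro exI[of _ 2]) (simp add: Cdag_pp)
    show "\<exists>\<kappa>::real. \<kappa> > 0 \<and> (\<forall>p\<in>Dom. \<forall>a<4. \<forall>b<4. \<forall>c<4. \<forall>d<4.
        BelRobinson (pp_metric f) a b c d p = \<kappa> * (cmod (Fzz f p))\<^sup>2 * (duR a * duR b * duR c * duR d))"
      by (intro exI[of _ 4]) (simp add: BelRobinson_pp)
  qed (use normK_pp Fzz_nonzero wedgeTK_eq_0_iff in \<open>simp_all add: covD4_Cdag_pp Kform_eq\<close>)
qed

end
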